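(* For every integer $n$, \[ \sum_{j\geq 0} p(n-4\pi_j) \equiv \begin{cases} 1 \pmod 2 & \text{if } n \text{ is a triangular number},\\ 0 \pmod 2 & \text{otherwise,}\end{cases} \] where $\pi_j = \frac38 j^2 + \frac{3-(-1)^j}{8}j + \frac{1-(-1)^j}{16}$ is the $j$th generalized pentagonal number ($\pi_0,\pi_1,\pi_2,\dots = 0,1,2,5,7,12,15,\dots$).
   Context: $p(m)$ denotes the number of partitions of $m$, with $p(0)=1$ and $p(m)=0$ for $m<0$. Triangular numbers are $k(k+1)/2$ for integers $k\geq 0$. *)

theory Defs
  imports Main "HOL-Library.Multiset" "HOL-Number_Theory.Cong"
begin

definition partition_count :: "int \<Rightarrow> nat" where
  "partition_count m = (if m < 0 then 0 else
     card {M :: nat multiset. (\<forall>x \<in># M. 0 < x) \<and> int (sum_mset M) = m})"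

(* j-th generalized pentagonal number:
   pi_j = 3/8 j^2 + (3 - (-1)^j)/8 j + (1 - (-1)^j)/16, written as (16 pi_j) div 16 *)
definition gen_pent :: "nat \<Rightarrow> int" where
  "gen_pent j = (6 * int j ^ 2 + 2 * (3 - (-1) ^ j) * int j + (1 - (-1) ^ j)) div 16"

definition triangular :: "int \<Rightarrow> bool" where
  "triangular n \<longleftrightarrow> (\<exists>k::nat. n = int k * (int k + 1) div 2)"

end

(*
  Over GF(2) all signs disappear: the partition generating function P(q) = 1 / prod_k (1 - q^k)
  becomes 1 / prod_k (1 + q^k), and Euler's identity prod_k (1 + q^k) * prod_k (1 + q^(2k-1)) = 1
  holds because squaring doubles all exponents in characteristic 2. Jacobi's triple product identity
  with base q^12, respectively q^4, gives modulo 2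
    sum_j q^(4 pi_j) = prod_k (1 + q^(4k)),
    sum_k q^(k(k+1)/2) = prod_k (1 + q^(4k)) * prod_k (1 + q^(2k-1)).
  Hence P(q) * sum_j q^(4 pi_j) = sum_k q^(k(k+1)/2) modulo 2, and the theorem compares the
  coefficients of q^n. Infinite products are avoided by computing modulo q^D throughout, with a
  finite form of the triple product obtained from Cauchy's q-binomial theorem.
*)

theory Submission
  imports Defs "HOL-Library.Z2" "HOL-Library.Nat_Bijection" "HOL-Computational_Algebra.Formal_Power_Series"
begin

section \<open>Gaussian binomial coefficients\<close>

fun qbinomial :: "'a::comm_ring_1 \<Rightarrow> nat \<Rightarrow> nat \<Rightarrow> 'a" where
  "qbinomial q 0 k = (if k = 0 then 1 else 0)"
| "qbinomial q (Suc n) 0 = 1"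
| "qbinomial q (Suc n) (Suc k) = qbinomial q n (Suc k) + q ^ (n - k) * qbinomial q n k"

lemma qbinomial_eq_0: "n < k \<Longrightarrow> qbinomial q n k = 0"
  by (induction q n k rule: qbinomial.induct) auto

lemma qbinomial_0_right [simp]: "qbinomial q n 0 = 1"
  by (cases n) auto

definition q_pochhammer :: "'a::comm_ring_1 \<Rightarrow> nat \<Rightarrow> 'a" where
  "q_pochhammer q n = (\<Prod>i\<in>{1..n}. 1 - q ^ i)"

lemma q_pochhammer_0 [simp]: "q_pochhammer q 0 = 1"
  by (simp add: q_pochhammer_def)

lemma q_pochhammer_Suc: "q_pochhammer q (Suc n) = q_pochhammer q n * (1 - q ^ Suc n)"
  by (simp add: q_pochhammer_def)

lemma q_pochhammer_Suc_split:
  assumes "i \<le> n"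
  shows "q_pochhammer q n * (1 - q ^ (n - i)) + q_pochhammer q n * (1 - q ^ Suc i) * q ^ (n - i)
    = q_pochhammer q (Suc n)"
proof -
  have "Suc i + (n - i) = Suc n"
    using assms by simp
  then have "q ^ Suc i * q ^ (n - i) = q ^ Suc n"
    by (metis power_add)
  moreover have "q_pochhammer q n * (1 - q ^ (n - i)) + q_pochhammer q n * (1 - q ^ Suc i) * q ^ (n - i)
      = q_pochhammer q n * (1 - q ^ Suc i * q ^ (n - i))"
    by (simp add: algebra_simps)
  ultimately show ?thesis
    by (simp add: q_pochhammer_Suc)
qed

lemma qbinomial_mult_q_pochhammer:
  "k \<le> n \<Longrightarrow> qbinomial q n k * q_pochhammer q k * q_pochhammer q (n - k) = q_pochhammer q n"
proof (induction n arbitrary: k)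
  case 0
  then show ?case by simp
next
  case (Suc n)
  let ?P = "q_pochhammer q"
  show ?case
  proof (cases k)
    case 0
    then show ?thesis by simp
  next
    case (Suc i)
    with Suc.prems have "i \<le> n" by simp
    have first: "qbinomial q n (Suc i) * ?P (Suc i) * ?P (n - i) = ?P n * (1 - q ^ (n - i))"
    proof (cases "i = n")
      case True
      then show ?thesis by (simp add: qbinomial_eq_0)
    next
      case False
      with \<open>i \<le> n\<close> have "n - i = Suc (n - Suc i)" by simp
      then have "?P (n - i) = ?P (n - Suc i) * (1 - q ^ (n - i))"
        by (simp add: q_pochhammer_Suc)
      with Suc.IH[of "Suc i"] False \<open>i \<le> n\<close> show ?thesis
        by (metis Suc_leI le_neq_implies_less mult.assoc)
    qed
    have "q ^ (n - i) * qbinomial q n i * ?P (Suc i) * ?P (n - i)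
        = (qbinomial q n i * ?P i * ?P (n - i)) * (1 - q ^ Suc i) * q ^ (n - i)"
      by (simp add: q_pochhammer_Suc algebra_simps)
    then have second: "q ^ (n - i) * qbinomial q n i * ?P (Suc i) * ?P (n - i) = ?P n * (1 - q ^ Suc i) * q ^ (n - i)"
      using Suc.IH[OF \<open>i \<le> n\<close>] by simp
    have "qbinomial q (Suc n) k * ?P k * ?P (Suc n - k)
        = qbinomial q n (Suc i) * ?P (Suc i) * ?P (n - i) + q ^ (n - i) * qbinomial q n i * ?P (Suc i) * ?P (n - i)"
      using Suc by (simp add: algebra_simps)
    also have "\<dots> = ?P (Suc n)"
      unfolding first second using \<open>i \<le> n\<close> by (rule q_pochhammer_Suc_split)
    finally show ?thesis .
  qed
qed

lemma Suc_choose_two: "Suc n choose 2 = (n choose 2) + n"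
  by (simp add: numeral_2_eq_2)

theorem qbinomial_theorem:
  "(\<Prod>i<n. y + x * q ^ i) = (\<Sum>j\<le>n. qbinomial q n j * q ^ (j choose 2) * x ^ j * y ^ (n - j))"
proof (induction n)
  case 0
  then show ?case by (simp add: binomial_eq_0)
next
  case (Suc n)
  let ?R = "\<lambda>n. \<Sum>j\<le>n. qbinomial q n j * q ^ (j choose 2) * x ^ j * y ^ (n - j)"
  have y_part: "y * ?R n = y ^ Suc n
      + (\<Sum>j\<le>n. qbinomial q n (Suc j) * q ^ (Suc j choose 2) * x ^ Suc j * y ^ (n - j))"
  proof -
    have "y * ?R n = (\<Sum>j\<le>n. qbinomial q n j * q ^ (j choose 2) * x ^ j * y ^ (Suc n - j))"
      by (simp add: sum_distrib_left Suc_diff_le algebra_simps)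
    also have "\<dots> = (\<Sum>j\<le>Suc n. qbinomial q n j * q ^ (j choose 2) * x ^ j * y ^ (Suc n - j))"
      by (simp add: qbinomial_eq_0)
    finally show ?thesis
      by (subst (asm) sum.atMost_Suc_shift) (simp add: binomial_eq_0)
  qed
  have x_part: "x * q ^ n * ?R n
      = (\<Sum>j\<le>n. q ^ (n - j) * qbinomial q n j * q ^ (Suc j choose 2) * x ^ Suc j * y ^ (n - j))"
    unfolding sum_distrib_left
  proof (rule sum.cong[OF refl])
    fix j assume "j \<in> {..n}"
    then have "q ^ n * q ^ (j choose 2) = q ^ (n - j) * q ^ (Suc j choose 2)"
      by (simp add: Suc_choose_two flip: power_add)
    then show "x * q ^ n * (qbinomial q n j * q ^ (j choose 2) * x ^ j * y ^ (n - j))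
        = q ^ (n - j) * qbinomial q n j * q ^ (Suc j choose 2) * x ^ Suc j * y ^ (n - j)"
      by (simp add: mult_ac) (metis mult.assoc mult.left_commute)
  qed
  have "?R (Suc n) = y ^ Suc n
      + (\<Sum>j\<le>n. qbinomial q (Suc n) (Suc j) * q ^ (Suc j choose 2) * x ^ Suc j * y ^ (n - j))"
    by (subst sum.atMost_Suc_shift) (simp add: binomial_eq_0)
  also have "\<dots> = y * ?R n + x * q ^ n * ?R n"
    unfolding y_part x_part by (simp add: algebra_simps sum.distrib)
  finally show ?case
    using Suc.IH by (simp add: algebra_simps)
qed

section \<open>Power series modulo a power of X\<close>

definition fps_eq_below :: "nat \<Rightarrow> 'a::zero fps \<Rightarrow> 'a fps \<Rightarrow> bool" where
  "fps_eq_below D f g \<longleftrightarrow> (\<forall>i<D. fps_nth f i = fps_nth g i)"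

lemma fps_eq_below_refl [simp]: "fps_eq_below D f f"
  by (simp add: fps_eq_below_def)

lemma fps_eq_below_sym: "fps_eq_below D f g \<Longrightarrow> fps_eq_below D g f"
  by (simp add: fps_eq_below_def)

lemma fps_eq_below_trans [trans]: "fps_eq_below D f g \<Longrightarrow> fps_eq_below D g h \<Longrightarrow> fps_eq_below D f h"
  by (simp add: fps_eq_below_def)

lemma fps_eq_below_mult:
  fixes f g :: "'a::comm_semiring_1 fps"
  shows "fps_eq_below D f g \<Longrightarrow> fps_eq_below D f' g' \<Longrightarrow> fps_eq_below D (f * f') (g * g')"
  unfolding fps_eq_below_def fps_mult_nth by (auto intro!: sum.cong)

lemma fps_eq_below_sum:
  "(\<And>x. x \<in> A \<Longrightarrow> fps_eq_below D (f x) (g x)) \<Longrightarrow> fps_eq_below D (sum f A) (sum g A)"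
  unfolding fps_eq_below_def fps_sum_nth by (auto intro!: sum.cong)

lemma fps_eq_below_prod:
  fixes f g :: "'b \<Rightarrow> 'a::comm_semiring_1 fps"
  shows "(\<And>x. x \<in> A \<Longrightarrow> fps_eq_below D (f x) (g x)) \<Longrightarrow> fps_eq_below D (prod f A) (prod g A)"
  by (induction A rule: infinite_finite_induct) (auto intro: fps_eq_below_mult)

lemma fps_eq_below_X_power_mult:
  "D \<le> e \<Longrightarrow> fps_eq_below D (fps_X ^ e * f) 0"
  by (simp add: fps_eq_below_def fps_X_power_mult_nth)

lemma fps_eq_below_mult_right_cancel:
  fixes f g c :: "'a::field fps"
  assumes "fps_eq_below D (f * c) (g * c)" and "fps_nth c 0 \<noteq> 0"
  shows "fps_eq_below D f g"
proof -
  have "fps_eq_below D (f * c * inverse c) (g * c * inverse c)"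
    using assms(1) by (rule fps_eq_below_mult) simp
  with assms(2) show ?thesis
    by (simp add: mult.assoc inverse_mult_eq_1')
qed

lemma fps_nth_mult_sum_X_power:
  assumes "finite U"
  shows "fps_nth (f * (\<Sum>u\<in>U. fps_X ^ g u)) n = (\<Sum>u | u \<in> U \<and> g u \<le> n. fps_nth f (n - g u))"
proof -
  have "fps_nth (f * (\<Sum>u\<in>U. fps_X ^ g u)) n = (\<Sum>u\<in>U. if g u \<le> n then fps_nth f (n - g u) else 0)"
    unfolding sum_distrib_left fps_sum_nth fps_X_power_mult_right_nth by (rule sum.cong) auto
  also have "\<dots> = (\<Sum>u | u \<in> U \<and> g u \<le> n. fps_nth f (n - g u))"
    using assms by (simp add: sum.inter_filter)
  finally show ?thesis .
qed

lemma fps_nth_sum_X_power: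
  assumes "finite U"
  shows "fps_nth (\<Sum>u\<in>U. fps_X ^ g u) n = of_nat (card {u \<in> U. g u = n})"
proof -
  have "fps_nth (\<Sum>u\<in>U. fps_X ^ g u) n = (\<Sum>u\<in>U. of_bool (g u = n))"
    unfolding fps_sum_nth by (rule sum.cong) auto
  also have "\<dots> = of_nat (card {u \<in> U. g u = n})"
    using assms by (simp add: Collect_conj_eq Int_commute)
  finally show ?thesis .
qed

section \<open>Partitions with bounded parts\<close>

definition bounded_partitions :: "nat \<Rightarrow> nat \<Rightarrow> nat multiset set" where
  "bounded_partitions N m = {M. (\<forall>x\<in>#M. 0 < x \<and> x \<le> N) \<and> sum_mset M = m}"

lemma size_le_sum_mset: "(\<forall>x\<in>#M. 0 < x) \<Longrightarrow> size M \<le> sum_mset (M :: nat multiset)"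
  by (induction M) auto

lemma member_le_sum_mset: "x \<in># M \<Longrightarrow> x \<le> sum_mset (M :: nat multiset)"
  by (metis le_add1 multi_member_split sum_mset.add_mset)

lemma finite_bounded_partitions: "finite (bounded_partitions N m)"
proof (rule finite_subset)
  show "bounded_partitions N m \<subseteq> (\<Union>s\<le>m. multisets_of_size {1..N} s)"
    using size_le_sum_mset by (fastforce simp: bounded_partitions_def multisets_of_size_def)
qed (simp add: finite_multisets_of_size)

lemma bounded_partitions_Suc_containing:
  "{M \<in> bounded_partitions (Suc N) m. Suc N \<in># M}
     = (if Suc N \<le> m then add_mset (Suc N) ` bounded_partitions (Suc N) (m - Suc N) else {})"
    (is "?A = _")
proof (cases "Suc N \<le> m")
  case True
  have "M \<in> add_mset (Suc N) ` bounded_partitions (Suc N) (m - Suc N)" if M: "M \<in> ?A" for M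
  proof (rule image_eqI)
    from M show M_eq: "M = add_mset (Suc N) (M - {#Suc N#})"
      by (simp add: insert_DiffM)
    have "sum_mset M = Suc N + sum_mset (M - {#Suc N#})"
      by (subst M_eq) simp
    with M show "M - {#Suc N#} \<in> bounded_partitions (Suc N) (m - Suc N)"
      unfolding bounded_partitions_def by (auto dest: in_diffD)
  qed
  moreover have "add_mset (Suc N) M \<in> ?A" if "M \<in> bounded_partitions (Suc N) (m - Suc N)" for M
    using that True unfolding bounded_partitions_def by auto
  ultimately show ?thesis
    unfolding if_P[OF True] by (intro subset_antisym subsetI image_subsetI)
next
  case False
  have "\<not> Suc N \<in># M" if "M \<in> bounded_partitions (Suc N) m" for M
    using that False member_le_sum_mset[of "Suc N" M] unfolding bounded_partitions_def by auto
  then show ?thesis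
    unfolding if_not_P[OF False] by blast
qed

lemma bounded_partitions_Suc:
  "bounded_partitions (Suc N) m = bounded_partitions N m \<union> {M \<in> bounded_partitions (Suc N) m. Suc N \<in># M}"
  unfolding bounded_partitions_def using le_Suc_eq by auto

lemma card_bounded_partitions_Suc:
  "card (bounded_partitions (Suc N) m)
     = card (bounded_partitions N m) + (if Suc N \<le> m then card (bounded_partitions (Suc N) (m - Suc N)) else 0)"
proof -
  let ?A = "{M \<in> bounded_partitions (Suc N) m. Suc N \<in># M}"
  have "bounded_partitions N m \<inter> ?A = {}"
    unfolding bounded_partitions_def by auto
  then have "card (bounded_partitions (Suc N) m) = card (bounded_partitions N m) + card ?A"
    by (subst bounded_partitions_Suc) (simp add: card_Un_disjoint finite_bounded_partitions)
  moreover have "inj_on (add_mset (Suc N)) X" for X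
    by (simp add: inj_on_def)
  ultimately show ?thesis
    unfolding bounded_partitions_Suc_containing by (simp add: card_image)
qed

definition bounded_partition_gf :: "nat \<Rightarrow> 'a::comm_ring_1 fps" where
  "bounded_partition_gf N = Abs_fps (\<lambda>m. of_nat (card (bounded_partitions N m)))"

lemma bounded_partition_gf_0: "bounded_partition_gf 0 = 1"
proof -
  have "(\<forall>x\<in>#M. 0 < x \<and> x \<le> (0::nat)) \<longleftrightarrow> M = {#}" for M
    by (cases M) auto
  then have "bounded_partitions 0 m = (if m = 0 then {{#}} else {})" for m
    by (auto simp: bounded_partitions_def)
  then show ?thesis
    by (intro fps_ext) (simp add: bounded_partition_gf_def)
qed

lemma bounded_partition_gf_Suc:
  "bounded_partition_gf (Suc N) * (1 - fps_X ^ Suc N) = bounded_partition_gf N"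
proof (rule fps_ext)
  fix m
  show "fps_nth (bounded_partition_gf (Suc N) * (1 - fps_X ^ Suc N)) m = fps_nth (bounded_partition_gf N) m"
    unfolding right_diff_distrib mult_1_right fps_sub_nth fps_X_power_mult_right_nth bounded_partition_gf_def
    by (simp add: card_bounded_partitions_Suc[of N m])
qed

theorem bounded_partition_gf_mult_q_pochhammer:
  "bounded_partition_gf N * q_pochhammer fps_X N = (1 :: 'a::comm_ring_1 fps)"
proof (induction N)
  case 0
  then show ?case by (simp add: bounded_partition_gf_0)
next
  case (Suc N)
  have "bounded_partition_gf (Suc N) * q_pochhammer fps_X (Suc N)
      = bounded_partition_gf (Suc N) * (1 - fps_X ^ Suc N) * (q_pochhammer fps_X N :: 'a fps)"
    by (simp add: q_pochhammer_Suc mult_ac)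
  also have "\<dots> = 1"
    unfolding bounded_partition_gf_Suc by (rule Suc.IH)
  finally show ?case .
qed

lemma bounded_partition_gf_nth:
  assumes "m \<le> N"
  shows "fps_nth (bounded_partition_gf N) m = of_nat (partition_count (int m))"
proof -
  have "M \<in> bounded_partitions N m \<longleftrightarrow> (\<forall>x\<in>#M. 0 < x) \<and> sum_mset M = m" for M
    using assms by (auto simp: bounded_partitions_def dest: member_le_sum_mset)
  then have "{M. (\<forall>x\<in>#M. 0 < x) \<and> int (sum_mset M) = int m} = bounded_partitions N m"
    unfolding of_nat_eq_iff by auto
  then show ?thesis
    by (simp add: bounded_partition_gf_def partition_count_def)
qed

section \<open>A finite Jacobi triple product\<close>

(* The exponent a u (u + 1) / 2 - b u of the u-th term of Jacobi's triple product with base q^a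
   and z = q^b. For (a, b) = (12, 4) its values are the numbers 4 pi_j, for (a, b) = (4, 1) the
   triangular numbers. *)
definition triple_product_exponent :: "nat \<Rightarrow> nat \<Rightarrow> int \<Rightarrow> nat" where
  "triple_product_exponent a b u = nat (int a * (u * (u + 1) div 2) - int b * u)"

lemma two_times_triangle_int: "2 * (u * (u + 1) div 2) = u * (u + 1)" for u :: int
  by simp

lemma triangle_int_bounds:
  fixes u :: int
  shows "0 \<le> u * (u + 1) div 2" and "u \<le> u * (u + 1) div 2"
proof -
  have "0 \<le> u * (u + 1) \<and> 0 \<le> u * (u - 1)"
  proof (cases "0 \<le> u")
    case True
    then show ?thesis
      by (cases "u = 0") simp_all
  next
    case False
    then show ?thesis
      by (simp add: mult_nonpos_nonpos)
  qed
  moreover have "2 * (u * (u + 1) div 2) = u * (u + 1)"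
    by (rule two_times_triangle_int)
  ultimately show "0 \<le> u * (u + 1) div 2" and "u \<le> u * (u + 1) div 2"
    unfolding distrib_left right_diff_distrib mult_1_right by linarith+
qed

lemma of_nat_triple_product_exponent:
  assumes "b \<le> a"
  shows "int (triple_product_exponent a b u) = int a * (u * (u + 1) div 2) - int b * u"
proof (cases "0 \<le> u")
  case True
  have "int b * u \<le> int a * u"
    using assms True by (simp add: mult_right_mono)
  also have "\<dots> \<le> int a * (u * (u + 1) div 2)"
    using triangle_int_bounds(2) by (simp add: mult_left_mono)
  finally show ?thesis
    by (simp add: triple_product_exponent_def)
next
  case False
  then have "int b * u \<le> 0"
    by (simp add: mult_nonneg_nonpos)
  moreover have "0 \<le> int a * (u * (u + 1) div 2)"
    using triangle_int_bounds(1)[of u] by simp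
  ultimately show ?thesis
    by (simp add: triple_product_exponent_def)
qed

lemma two_times_triple_product_exponent:
  assumes "b \<le> a"
  shows "2 * int (triple_product_exponent a b u) = int a * u * (u + 1) - 2 * int b * u"
proof -
  define T where "T = u * (u + 1) div 2"
  have "2 * T = u * (u + 1)"
    unfolding T_def by (rule two_times_triangle_int)
  moreover have "int (triple_product_exponent a b u) = int a * T - int b * u"
    unfolding T_def by (rule of_nat_triple_product_exponent[OF assms])
  ultimately show ?thesis
    by algebra
qed

lemma abs_le_triple_product_exponent:
  assumes "0 < b" "b < a"
  shows "\<bar>u\<bar> \<le> int (triple_product_exponent a b u)"
proof (cases "0 \<le> u")
  case True
  have "1 \<le> int a - int b"
    using assms by simp
  then have "u \<le> (int a - int b) * u"
    using mult_right_mono[OF _ True] by fastforce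
  also have "\<dots> \<le> int a * (u * (u + 1) div 2) - int b * u"
    using triangle_int_bounds(2)[of u] assms by (simp add: algebra_simps mult_left_mono)
  finally show ?thesis
    using True assms by (simp add: of_nat_triple_product_exponent)
next
  case False
  have "- u \<le> - (int b * u)"
    using assms False by (simp add: mult_right_mono_neg)
  also have "\<dots> \<le> int a * (u * (u + 1) div 2) - int b * u"
    using triangle_int_bounds(1)[of u] by simp
  finally show ?thesis
    using False assms by (simp add: of_nat_triple_product_exponent)
qed

lemma finite_triple_product_exponent_less:
  assumes "0 < b" "b < a"
  shows "finite {u. triple_product_exponent a b u < D}"
proof (rule finite_subset)
  show "{u. triple_product_exponent a b u < D} \<subseteq> {- int D..int D}"
  proof
    fix u assume "u \<in> {u. triple_product_exponent a b u < D}"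
    then have "\<bar>u\<bar> \<le> int D"
      using abs_le_triple_product_exponent[OF assms, of u] by simp
    then show "u \<in> {- int D..int D}"
      using abs_le_D1 abs_le_D2 by fastforce
  qed
qed simp

lemma two_times_choose_two_int: "2 * int (n choose 2) = int n * (int n - 1)"
  by (induction n) (simp_all add: Suc_choose_two binomial_eq_0 algebra_simps)

lemma triple_product_exponent_shift:
  assumes "b \<le> a" "j \<le> 2 * N"
  shows "a * (j choose 2) + b * j + a * N * (2 * N - j)
    = b * N + a * (N choose 2) + a * N * N + triple_product_exponent a b (int N - int j)"
proof -
  have "int (2 * N - j) = 2 * int N - int j"
    using assms(2) by simp
  then have "int (a * (j choose 2) + b * j + a * N * (2 * N - j))
      = int (b * N + a * (N choose 2) + a * N * N + triple_product_exponent a b (int N - int j))"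
    using two_times_choose_two_int[of j] two_times_choose_two_int[of N]
      two_times_triple_product_exponent[OF assms(1), of "int N - int j"]
    unfolding of_nat_add of_nat_mult by algebra
  then show ?thesis
    by (simp only: of_nat_eq_iff)
qed

(* prod_{k<N} (1 + q^(k+1) / z) (1 + z q^k) for q = X^a and z = X^b: the product side of the
   triple product identity without the factor prod_k (1 - q^k), cut off after N factors. *)
definition finite_triple_product :: "nat \<Rightarrow> nat \<Rightarrow> nat \<Rightarrow> 'a::comm_semiring_1 fps" where
  "finite_triple_product a b N = (\<Prod>k<N. (1 + fps_X ^ (a * k + (a - b))) * (1 + fps_X ^ (a * k + b)))"

lemma prod_lessThan_add: "(\<Prod>i<m + n. f i) = (\<Prod>i<m. f i) * (\<Prod>i<n. f (m + i))" for m n :: nat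
  by (induction n) (simp_all add: mult_ac)

lemma sum_lessThan_affine: "(\<Sum>i<N. b + a * i) = b * N + a * (N choose 2)"
  by (induction N) (simp_all add: Suc_choose_two binomial_eq_0 algebra_simps)

lemma cauchy_product_lower_half:
  assumes "b \<le> a"
  shows "(\<Prod>i<N. fps_X ^ (a * N) + fps_X ^ b * (fps_X ^ a) ^ i :: 'a::comm_semiring_1 fps)
    = fps_X ^ (b * N + a * (N choose 2)) * (\<Prod>k<N. 1 + fps_X ^ (a * k + (a - b)))"
proof -
  let ?X = "fps_X :: 'a fps"
  have "?X ^ (a * N) + ?X ^ b * (?X ^ a) ^ i = ?X ^ (b + a * i) * (1 + ?X ^ (a * (N - Suc i) + (a - b)))"
    if "i < N" for i
  proof -
    from that have "a * N = a * Suc i + a * (N - Suc i)"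
      by (metis add_diff_inverse_nat distrib_left not_less_eq)
    with assms have "b + a * i + (a * (N - Suc i) + (a - b)) = a * N"
      by simp
    then have "?X ^ (b + a * i) * ?X ^ (a * (N - Suc i) + (a - b)) = ?X ^ (a * N)"
      by (simp flip: power_add)
    then show ?thesis
      by (simp add: distrib_left power_add power_mult add.commute)
  qed
  then have "(\<Prod>i<N. ?X ^ (a * N) + ?X ^ b * (?X ^ a) ^ i)
      = ?X ^ (\<Sum>i<N. b + a * i) * (\<Prod>i<N. 1 + ?X ^ (a * (N - Suc i) + (a - b)))"
    by (simp add: prod.distrib power_sum)
  also have "(\<Prod>i<N. 1 + ?X ^ (a * (N - Suc i) + (a - b))) = (\<Prod>k<N. 1 + ?X ^ (a * k + (a - b)))"
    by (rule prod.reindex_bij_witness[of _ "\<lambda>k. N - Suc k" "\<lambda>k. N - Suc k"]) auto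
  finally show ?thesis
    by (simp only: sum_lessThan_affine)
qed

lemma cauchy_product_upper_half:
  "(\<Prod>i<N. fps_X ^ (a * N) + fps_X ^ b * (fps_X ^ a) ^ (N + i) :: 'a::comm_semiring_1 fps)
    = fps_X ^ (a * N * N) * (\<Prod>k<N. 1 + fps_X ^ (a * k + b))"
proof -
  have "fps_X ^ b * (fps_X ^ a) ^ (N + i) = fps_X ^ (a * N) * (fps_X ^ (a * k + b) :: 'a fps)" if "k = i" for i k
    using that by (simp only: power_mult[symmetric] power_add[symmetric]) (simp add: algebra_simps)
  then have "fps_X ^ (a * N) + fps_X ^ b * (fps_X ^ a) ^ (N + i) = fps_X ^ (a * N) * (1 + fps_X ^ (a * i + b) :: 'a fps)" for i
    by (simp add: distrib_left)
  then show ?thesis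
    by (simp add: prod.distrib power_mult)
qed

theorem finite_jacobi_triple_product:
  assumes "b \<le> a"
  shows "(finite_triple_product a b N :: 'a::comm_ring_1 fps)
    = (\<Sum>j\<le>2 * N. qbinomial (fps_X ^ a) (2 * N) j * fps_X ^ triple_product_exponent a b (int N - int j))"
    (is "_ = ?rhs")
proof -
  let ?X = "fps_X :: 'a fps"
  define c where "c = b * N + a * (N choose 2) + a * N * N"
  \<comment> \<open>Cauchy's theorem with q = X^a, x = X^b and y = X^(a N)\<close>
  have "?X ^ c * finite_triple_product a b N = (\<Prod>i<2 * N. ?X ^ (a * N) + ?X ^ b * (?X ^ a) ^ i)"
    unfolding mult_2 prod_lessThan_add cauchy_product_lower_half[OF assms] cauchy_product_upper_half finite_triple_product_def
      prod.distrib c_def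
    by (simp add: power_add mult_ac)
  also have "\<dots> = (\<Sum>j\<le>2 * N. qbinomial (?X ^ a) (2 * N) j * (?X ^ a) ^ (j choose 2)
      * (?X ^ b) ^ j * (?X ^ (a * N)) ^ (2 * N - j))"
    by (rule qbinomial_theorem)
  also have "\<dots> = ?X ^ c * ?rhs"
    unfolding sum_distrib_left
  proof (rule sum.cong[OF refl])
    fix j assume "j \<in> {..2 * N}"
    then have "a * (j choose 2) + b * j + a * N * (2 * N - j) = c + triple_product_exponent a b (int N - int j)"
      using triple_product_exponent_shift[OF assms, of j N] by (simp add: c_def)
    then have "(?X ^ a) ^ (j choose 2) * (?X ^ b) ^ j * (?X ^ (a * N)) ^ (2 * N - j)
        = ?X ^ c * ?X ^ triple_product_exponent a b (int N - int j)"
      by (simp only: power_mult[symmetric] power_add[symmetric])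
    then show "qbinomial (?X ^ a) (2 * N) j * (?X ^ a) ^ (j choose 2) * (?X ^ b) ^ j * (?X ^ (a * N)) ^ (2 * N - j)
        = ?X ^ c * (qbinomial (?X ^ a) (2 * N) j * ?X ^ triple_product_exponent a b (int N - int j))"
      by (simp only: mult.assoc) (rule mult.left_commute)
  qed
  finally have "fps_shift c (finite_triple_product a b N * ?X ^ c) = fps_shift c (?rhs * ?X ^ c)"
    by (simp only: mult.commute)
  then show ?thesis
    by (simp only: fps_shift_times_fps_X_power')
qed

lemma fps_nth_0_q_pochhammer_X_power:
  "0 < a \<Longrightarrow> fps_nth (q_pochhammer (fps_X ^ a) K :: 'a::comm_ring_1 fps) 0 = 1"
  by (induction K) (simp_all add: q_pochhammer_Suc)

lemma q_pochhammer_X_power_eq_below: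
  assumes "0 < a" "D \<le> K"
  shows "fps_eq_below D (q_pochhammer (fps_X ^ a) K :: 'a::comm_ring_1 fps) (q_pochhammer (fps_X ^ a) D)"
  using assms(2)
proof (induction K rule: dec_induct)
  case (step K)
  have "Suc K \<le> a * Suc K"
    using mult_le_mono1[of 1 a "Suc K"] assms(1) by simp
  then have "D \<le> a * Suc K"
    using step.hyps by linarith
  then have "fps_eq_below D (1 - fps_X ^ (a * Suc K) :: 'a fps) 1"
    by (simp add: fps_eq_below_def)
  then have "fps_eq_below D (1 - (fps_X ^ a) ^ Suc K :: 'a fps) 1"
    by (simp only: power_mult)
  then have "fps_eq_below D (q_pochhammer (fps_X ^ a) (Suc K)) (q_pochhammer (fps_X ^ a) K * (1 :: 'a fps))"
    unfolding q_pochhammer_Suc by (rule fps_eq_below_mult[OF fps_eq_below_refl])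
  then show ?case
    unfolding mult_1_right using step.IH by (rule fps_eq_below_trans)
qed simp

lemma qbinomial_X_power_eq_below:
  assumes "0 < a" "D \<le> j" "D \<le> n - j" "j \<le> n"
  shows "fps_eq_below D (q_pochhammer (fps_X ^ a) D * qbinomial (fps_X ^ a) n j :: 'a::field fps) 1"
proof -
  let ?P = "q_pochhammer (fps_X ^ a :: 'a fps)"
  have "?P D * qbinomial (fps_X ^ a) n j * ?P D = qbinomial (fps_X ^ a) n j * ?P D * ?P D"
    by (simp add: mult_ac)
  also have "fps_eq_below D \<dots> (qbinomial (fps_X ^ a) n j * ?P j * ?P (n - j))"
    using assms by (intro fps_eq_below_mult fps_eq_below_refl fps_eq_below_sym[OF q_pochhammer_X_power_eq_below]) auto
  also have "\<dots> = ?P n"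
    using assms(4) by (rule qbinomial_mult_q_pochhammer)
  also have "fps_eq_below D \<dots> (1 * ?P D)"
    using q_pochhammer_X_power_eq_below[OF assms(1), of D n] assms(2,4) by simp
  finally show ?thesis
    by (rule fps_eq_below_mult_right_cancel) (simp add: fps_nth_0_q_pochhammer_X_power[OF assms(1)])
qed

(* An exponent e < D forces |N - j| < D, hence j >= D and 2 N - j >= D, and then the Gaussian
   coefficient is 1 / (q; q)_D modulo X^D. *)
lemma triple_product_term_eq_below:
  assumes "0 < b" "b < a" "2 * D \<le> N" "j \<le> 2 * N"
  defines "e \<equiv> triple_product_exponent a b (int N - int j)"
  shows "fps_eq_below D (q_pochhammer (fps_X ^ a) D * qbinomial (fps_X ^ a) (2 * N) j * fps_X ^ e :: 'a::field fps)
    (if e < D then fps_X ^ e else 0)"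
proof (cases "e < D")
  case True
  then have "\<bar>int N - int j\<bar> < int D"
    using abs_le_triple_product_exponent[OF assms(1,2)] unfolding e_def by (meson le_less_trans of_nat_less_iff)
  then have "fps_eq_below D (q_pochhammer (fps_X ^ a) D * qbinomial (fps_X ^ a) (2 * N) j :: 'a fps) 1"
    using assms by (intro qbinomial_X_power_eq_below) auto
  with True show ?thesis
    using fps_eq_below_mult[OF _ fps_eq_below_refl] by fastforce
next
  case False
  then show ?thesis
    by (simp add: fps_eq_below_X_power_mult mult.commute[of _ "fps_X ^ _"])
qed

theorem jacobi_triple_product_eq_below:
  assumes "0 < b" "b < a" "2 * D \<le> N"
  shows "fps_eq_below D (q_pochhammer (fps_X ^ a) D * finite_triple_product a b N)
    (\<Sum>u | triple_product_exponent a b u < D. fps_X ^ triple_product_exponent a b u :: 'a::field fps)"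
proof -
  let ?e = "triple_product_exponent a b"
  let ?P = "q_pochhammer (fps_X ^ a) D :: 'a fps"
  have "?P * finite_triple_product a b N
      = (\<Sum>j\<le>2 * N. ?P * qbinomial (fps_X ^ a) (2 * N) j * fps_X ^ ?e (int N - int j))"
    using assms by (simp add: finite_jacobi_triple_product sum_distrib_left mult.assoc)
  also have "fps_eq_below D \<dots> (\<Sum>j\<le>2 * N. if ?e (int N - int j) < D then fps_X ^ ?e (int N - int j) else 0)"
    using assms by (intro fps_eq_below_sum triple_product_term_eq_below) auto
  also have "\<dots> = (\<Sum>u\<in>{- int N..int N}. if ?e u < D then fps_X ^ ?e u else 0)"
    by (rule sum.reindex_bij_witness[of _ "\<lambda>u. nat (int N - u)" "\<lambda>j. int N - int j"]) auto
  also have "\<dots> = (\<Sum>u | ?e u < D. fps_X ^ ?e u)"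
  proof -
    have "\<bar>u\<bar> \<le> int N" if "?e u < D" for u
      using abs_le_triple_product_exponent[OF assms(1,2), of u] that assms(3) by linarith
    then have "{u \<in> {- int N..int N}. ?e u < D} = {u. ?e u < D}"
      using abs_le_D1 abs_le_D2 by fastforce
    then show ?thesis
      by (simp flip: sum.inter_filter)
  qed
  finally show ?thesis .
qed

section \<open>Products over distinct parts\<close>

definition distinct_parts_gf :: "nat set \<Rightarrow> 'a::comm_semiring_1 fps" where
  "distinct_parts_gf S = (\<Prod>e\<in>S. 1 + fps_X ^ e)"

lemma distinct_parts_gf_empty [simp]: "distinct_parts_gf {} = 1"
  by (simp add: distinct_parts_gf_def)

lemma distinct_parts_gf_union:
  "finite A \<Longrightarrow> finite B \<Longrightarrow> A \<inter> B = {} \<Longrightarrow> distinct_parts_gf (A \<union> B) = distinct_parts_gf A * distinct_parts_gf B"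
  unfolding distinct_parts_gf_def by (rule prod.union_disjoint)

lemma distinct_parts_gf_mult_below:
  assumes "\<And>e. \<not> (P e \<and> Q e)"
  shows "distinct_parts_gf {e. 0 < e \<and> e < D \<and> P e} * distinct_parts_gf {e. 0 < e \<and> e < D \<and> Q e}
    = distinct_parts_gf {e. 0 < e \<and> e < D \<and> (P e \<or> Q e)}"
proof -
  have fin: "finite {e. 0 < e \<and> e < D \<and> R e}" for R
    by (rule finite_subset[of _ "{..<D}"]) auto
  have "{e. 0 < e \<and> e < D \<and> (P e \<or> Q e)} = {e. 0 < e \<and> e < D \<and> P e} \<union> {e. 0 < e \<and> e < D \<and> Q e}"
    by blast
  then show ?thesis
    using assms by (simp add: distinct_parts_gf_union fin disjoint_iff)
qed

lemma distinct_parts_gf_image: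
  "inj_on g I \<Longrightarrow> distinct_parts_gf (g ` I) = (\<Prod>i\<in>I. 1 + fps_X ^ g i)"
  unfolding distinct_parts_gf_def by (simp add: prod.reindex)

lemma distinct_parts_gf_eq_below:
  assumes "finite S"
  shows "fps_eq_below D (distinct_parts_gf S) (distinct_parts_gf {e \<in> S. e < D})"
proof -
  let ?low = "{e \<in> S. e < D}" and ?high = "{e \<in> S. \<not> e < D}"
  have "distinct_parts_gf S = distinct_parts_gf (?low \<union> ?high)"
    by (rule arg_cong[where f = distinct_parts_gf]) blast
  also have "\<dots> = distinct_parts_gf ?low * distinct_parts_gf ?high"
    by (rule distinct_parts_gf_union) (use assms in auto)
  also have "fps_eq_below D \<dots> (distinct_parts_gf ?low * 1)"
  proof (intro fps_eq_below_mult fps_eq_below_refl)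
    have "fps_eq_below D (\<Prod>e\<in>?high. 1 + fps_X ^ e) (\<Prod>e\<in>?high. 1)"
      by (rule fps_eq_below_prod) (simp add: fps_eq_below_def)
    then show "fps_eq_below D (distinct_parts_gf ?high) 1"
      by (simp add: distinct_parts_gf_def)
  qed
  finally show ?thesis
    by simp
qed

lemma residue_class_image_below:
  fixes a r D N :: nat
  assumes "0 < r" "r \<le> a" "D \<le> N"
  shows "{e \<in> (\<lambda>k. a * k + r) ` {..<N}. e < D} = {e. 0 < e \<and> e < D \<and> e mod a = r mod a}"
proof (intro equalityI subsetI)
  fix e assume "e \<in> {e \<in> (\<lambda>k. a * k + r) ` {..<N}. e < D}"
  then obtain k where "e = a * k + r" "e < D"
    by blast
  with assms show "e \<in> {e. 0 < e \<and> e < D \<and> e mod a = r mod a}"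
    by simp
next
  fix e assume "e \<in> {e. 0 < e \<and> e < D \<and> e mod a = r mod a}"
  then have e: "0 < e" "e < D" "e mod a = r mod a"
    by simp_all
  have "r \<le> e"
  proof (cases "r = a")
    case True
    with e show ?thesis
      by (simp add: mod_eq_0_iff_dvd dvd_imp_le)
  next
    case False
    with assms e show ?thesis
      using mod_less_eq_dividend[of e a] by simp
  qed
  with e have "a dvd e - r"
    by (simp add: mod_eq_dvd_iff_nat)
  then obtain k where k: "e - r = a * k"
    by (rule dvdE)
  have "k \<le> a * k"
    using assms by simp
  with k e assms \<open>r \<le> e\<close> have "k < N" "e = a * k + r"
    by linarith+
  with e show "e \<in> {e \<in> (\<lambda>k. a * k + r) ` {..<N}. e < D}"
    by blast
qed

lemma prod_residue_class_eq_below: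
  assumes "0 < r" "r \<le> a" "D \<le> N"
  shows "fps_eq_below D (\<Prod>k<N. 1 + fps_X ^ (a * k + r) :: 'a::comm_semiring_1 fps)
    (distinct_parts_gf {e. 0 < e \<and> e < D \<and> e mod a = r mod a})"
proof -
  have "inj_on (\<lambda>k. a * k + r) {..<N}"
    by (rule inj_onI) (use assms in simp)
  then have "(\<Prod>k<N. 1 + fps_X ^ (a * k + r) :: 'a fps) = distinct_parts_gf ((\<lambda>k. a * k + r) ` {..<N})"
    by (simp add: distinct_parts_gf_image)
  also have "fps_eq_below D \<dots> (distinct_parts_gf {e \<in> (\<lambda>k. a * k + r) ` {..<N}. e < D})"
    by (rule distinct_parts_gf_eq_below) simp
  finally show ?thesis
    unfolding residue_class_image_below[OF assms] .
qed

section \<open>Characteristic two\<close>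

lemma uminus_bit_fps [simp]: "- f = (f :: bit fps)"
  by (rule fps_ext) simp

lemma diff_bit_fps: "f - g = f + (g :: bit fps)"
  by (simp add: diff_conv_add_uminus)

lemma two_bit_fps [simp]: "(2 :: bit fps) = 0"
  by (simp add: numeral_fps_const)

lemma q_pochhammer_X_power_bit:
  "q_pochhammer (fps_X ^ a :: bit fps) n = (\<Prod>k<n. 1 + fps_X ^ (a * k + a))"
proof -
  have "(fps_X ^ a :: bit fps) ^ Suc k = fps_X ^ (a * k + a)" for k
    by (simp only: power_mult[symmetric]) (simp add: algebra_simps)
  then show ?thesis
    unfolding q_pochhammer_def One_nat_def prod.atLeast1_atMost_eq by (simp add: diff_bit_fps)
qed

lemma distinct_parts_gf_square:
  assumes "finite S"
  shows "distinct_parts_gf S ^ 2 = (distinct_parts_gf ((*) 2 ` S) :: bit fps)"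
proof -
  have "(1 + fps_X ^ e :: bit fps) ^ 2 = 1 + fps_X ^ (2 * e)" for e
    by (simp add: power2_sum power_mult mult.commute[of 2 e])
  moreover have "inj_on ((*) (2::nat)) S"
    by (simp add: inj_on_def)
  ultimately show ?thesis
    by (simp add: distinct_parts_gf_def prod_power_distrib prod.reindex)
qed

definition multiples_below :: "nat \<Rightarrow> nat \<Rightarrow> nat set" where
  "multiples_below D c = {e. 0 < e \<and> e < D \<and> c dvd e}"

definition odd_multiples_below :: "nat \<Rightarrow> nat \<Rightarrow> nat set" where
  "odd_multiples_below D c = {e. e < D \<and> c dvd e \<and> odd (e div c)}"

lemma finite_multiples_below [simp]: "finite (multiples_below D c)"
  by (rule finite_subset[of _ "{..<D}"]) (auto simp: multiples_below_def)

lemma finite_odd_multiples_below [simp]: "finite (odd_multiples_below D c)"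
  by (rule finite_subset[of _ "{..<D}"]) (auto simp: odd_multiples_below_def)

lemma multiples_below_split:
  assumes "0 < c"
  shows "multiples_below D c = odd_multiples_below D c \<union> multiples_below D (2 * c)"
proof (intro equalityI subsetI)
  fix e assume "e \<in> multiples_below D c"
  then obtain k where e: "e = c * k" "0 < k" "e < D"
    by (auto simp: multiples_below_def elim!: dvdE)
  show "e \<in> odd_multiples_below D c \<union> multiples_below D (2 * c)"
  proof (cases "odd k")
    case True
    with e assms show ?thesis
      by (simp add: odd_multiples_below_def)
  next
    case False
    then obtain m where "k = 2 * m"
      by blast
    with e assms show ?thesis
      by (simp add: multiples_below_def)
  qed
next
  fix e assume "e \<in> odd_multiples_below D c \<union> multiples_below D (2 * c)"
  then show "e \<in> multiples_below D c"
    by (auto simp: odd_multiples_below_def multiples_below_def intro: dvd_mult_left odd_pos)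
qed

lemma odd_multiples_below_disjoint:
  assumes "0 < c"
  shows "odd_multiples_below D c \<inter> multiples_below D (2 * c) = {}"
proof -
  have "even (e div c)" if "2 * c dvd e" for e
    using that assms by (auto elim!: dvdE)
  then show ?thesis
    by (auto simp: odd_multiples_below_def multiples_below_def)
qed

lemma odd_multiples_below_double:
  assumes "0 < c"
  shows "{e \<in> (*) 2 ` odd_multiples_below D c. e < D} = odd_multiples_below D (2 * c)"
proof (intro equalityI subsetI)
  fix e assume "e \<in> {e \<in> (*) 2 ` odd_multiples_below D c. e < D}"
  then obtain k where "e = 2 * (c * k)" "odd k" "e < D"
    using assms by (auto simp: odd_multiples_below_def)
  then show "e \<in> odd_multiples_below D (2 * c)"
    using assms by (simp add: odd_multiples_below_def mult.assoc)
next
  fix e assume "e \<in> odd_multiples_below D (2 * c)"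
  then obtain k where "e = 2 * (c * k)" "odd k" "e < D"
    using assms by (auto simp: odd_multiples_below_def mult.assoc)
  moreover from this have "c * k \<in> odd_multiples_below D c"
    using assms by (simp add: odd_multiples_below_def)
  ultimately show "e \<in> {e \<in> (*) 2 ` odd_multiples_below D c. e < D}"
    by blast
qed

(* Euler's theorem modulo 2: the multiples of c split into the odd multiples and the multiples of
   2 c, and squaring a product of binomials doubles its exponents. *)
lemma distinct_parts_gf_odd_multiples_multiples_eq_below:
  assumes "0 < c"
  shows "fps_eq_below D (distinct_parts_gf (odd_multiples_below D c) * distinct_parts_gf (multiples_below D c) :: bit fps) 1"
  using assms
proof (induction "D - c" arbitrary: c rule: less_induct)
  case less
  show ?case
  proof (cases "D \<le> c")
    case True
    have "odd_multiples_below D c = {}" "multiples_below D c = {}"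
      using True by (auto simp: odd_multiples_below_def multiples_below_def dest: dvd_imp_le intro: odd_pos)
    then show ?thesis
      by simp
  next
    case False
    let ?O = "odd_multiples_below D" and ?M = "multiples_below D"
    have "distinct_parts_gf (?O c) * distinct_parts_gf (?M c)
        = distinct_parts_gf (?O c) ^ 2 * (distinct_parts_gf (?M (2 * c)) :: bit fps)"
      using multiples_below_split[OF less.prems] odd_multiples_below_disjoint[OF less.prems]
      by (simp add: distinct_parts_gf_union power2_eq_square mult.assoc)
    also have "\<dots> = distinct_parts_gf ((*) 2 ` ?O c) * distinct_parts_gf (?M (2 * c))"
      by (simp add: distinct_parts_gf_square)
    also have "fps_eq_below D \<dots> (distinct_parts_gf (?O (2 * c)) * distinct_parts_gf (?M (2 * c)))"
      using distinct_parts_gf_eq_below[of "(*) 2 ` ?O c" D] odd_multiples_below_double[OF less.prems]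
      by (intro fps_eq_below_mult fps_eq_below_refl) simp
    also have "fps_eq_below D \<dots> 1"
      using False less.prems by (intro less.hyps) auto
    finally show ?thesis .
  qed
qed

lemma finite_triple_product_bit_eq_below:
  assumes "0 < b" "b < a" "D \<le> N"
  shows "fps_eq_below D (q_pochhammer (fps_X ^ a) D * finite_triple_product a b N :: bit fps)
    (distinct_parts_gf {e. 0 < e \<and> e < D \<and> e mod a = a mod a}
     * distinct_parts_gf {e. 0 < e \<and> e < D \<and> e mod a = (a - b) mod a}
     * distinct_parts_gf {e. 0 < e \<and> e < D \<and> e mod a = b mod a})"
proof -
  have "q_pochhammer (fps_X ^ a) D * finite_triple_product a b N
      = (\<Prod>k<D. 1 + fps_X ^ (a * k + a)) * (\<Prod>k<N. 1 + fps_X ^ (a * k + (a - b)))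
        * (\<Prod>k<N. 1 + fps_X ^ (a * k + b) :: bit fps)" (is "_ = ?prods")
    unfolding q_pochhammer_X_power_bit finite_triple_product_def prod.distrib by (simp only: mult.assoc)
  moreover have "fps_eq_below D ?prods (distinct_parts_gf {e. 0 < e \<and> e < D \<and> e mod a = a mod a}
      * distinct_parts_gf {e. 0 < e \<and> e < D \<and> e mod a = (a - b) mod a}
      * distinct_parts_gf {e. 0 < e \<and> e < D \<and> e mod a = b mod a})"
  proof (intro fps_eq_below_mult)
    show "fps_eq_below D (\<Prod>k<D. 1 + fps_X ^ (a * k + a) :: bit fps)
        (distinct_parts_gf {e. 0 < e \<and> e < D \<and> e mod a = a mod a})"
      by (rule prod_residue_class_eq_below) (use assms in simp_all)
    show "fps_eq_below D (\<Prod>k<N. 1 + fps_X ^ (a * k + (a - b)) :: bit fps)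
        (distinct_parts_gf {e. 0 < e \<and> e < D \<and> e mod a = (a - b) mod a})"
      by (rule prod_residue_class_eq_below) (use assms in simp_all)
    show "fps_eq_below D (\<Prod>k<N. 1 + fps_X ^ (a * k + b) :: bit fps)
        (distinct_parts_gf {e. 0 < e \<and> e < D \<and> e mod a = b mod a})"
      by (rule prod_residue_class_eq_below) (use assms in simp_all)
  qed
  ultimately show ?thesis
    by simp
qed

lemma pentagonal_series_bit_eq_below:
  "fps_eq_below D (\<Sum>u | triple_product_exponent 12 4 u < D. fps_X ^ triple_product_exponent 12 4 u :: bit fps)
    (distinct_parts_gf (multiples_below D 4))"
proof -
  have "fps_eq_below D (\<Sum>u | triple_product_exponent 12 4 u < D. fps_X ^ triple_product_exponent 12 4 u :: bit fps)
      (q_pochhammer (fps_X ^ 12) D * finite_triple_product 12 4 (2 * D))"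
    by (rule fps_eq_below_sym, rule jacobi_triple_product_eq_below) simp_all
  also have "fps_eq_below D \<dots> (distinct_parts_gf {e. 0 < e \<and> e < D \<and> e mod 12 = 0}
      * distinct_parts_gf {e. 0 < e \<and> e < D \<and> e mod 12 = 8}
      * distinct_parts_gf {e. 0 < e \<and> e < D \<and> e mod 12 = 4})"
    using finite_triple_product_bit_eq_below[of 4 12 D "2 * D"] by simp
  also have "\<dots> = distinct_parts_gf {e. 0 < e \<and> e < D \<and> (e mod 12 = 0 \<or> e mod 12 = 8)}
      * distinct_parts_gf {e. 0 < e \<and> e < D \<and> e mod 12 = 4}"
    by (subst distinct_parts_gf_mult_below) auto
  also have "\<dots> = distinct_parts_gf {e. 0 < e \<and> e < D \<and> ((e mod 12 = 0 \<or> e mod 12 = 8) \<or> e mod 12 = 4)}"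
    by (rule distinct_parts_gf_mult_below) auto
  also have "{e. 0 < e \<and> e < D \<and> ((e mod 12 = 0 \<or> e mod 12 = 8) \<or> e mod 12 = (4::nat))} = multiples_below D 4"
  proof -
    have "((e mod 12 = 0 \<or> e mod 12 = 8) \<or> e mod 12 = 4) \<longleftrightarrow> 4 dvd e" for e :: nat
      by presburger
    then show ?thesis
      by (simp add: multiples_below_def)
  qed
  finally show ?thesis .
qed

lemma triangular_series_bit_eq_below:
  "fps_eq_below D (\<Sum>u | triple_product_exponent 4 1 u < D. fps_X ^ triple_product_exponent 4 1 u :: bit fps)
    (distinct_parts_gf (multiples_below D 4) * distinct_parts_gf (odd_multiples_below D 1))"
proof -
  have "fps_eq_below D (\<Sum>u | triple_product_exponent 4 1 u < D. fps_X ^ triple_product_exponent 4 1 u :: bit fps)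
      (q_pochhammer (fps_X ^ 4) D * finite_triple_product 4 1 (2 * D))"
    by (rule fps_eq_below_sym, rule jacobi_triple_product_eq_below) simp_all
  also have "fps_eq_below D \<dots> (distinct_parts_gf {e. 0 < e \<and> e < D \<and> e mod 4 = 0}
      * distinct_parts_gf {e. 0 < e \<and> e < D \<and> e mod 4 = 3}
      * distinct_parts_gf {e. 0 < e \<and> e < D \<and> e mod 4 = 1})"
    using finite_triple_product_bit_eq_below[of 1 4 D "2 * D"] by simp
  also have "\<dots> = distinct_parts_gf {e. 0 < e \<and> e < D \<and> e mod 4 = 0}
      * distinct_parts_gf {e. 0 < e \<and> e < D \<and> (e mod 4 = 3 \<or> e mod 4 = 1)}"
    unfolding mult.assoc by (subst distinct_parts_gf_mult_below) auto
  also have "{e. 0 < e \<and> e < D \<and> e mod 4 = (0::nat)} = multiples_below D 4"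
    by (auto simp: multiples_below_def)
  also have "{e. 0 < e \<and> e < D \<and> (e mod 4 = 3 \<or> e mod 4 = (1::nat))} = odd_multiples_below D 1"
  proof -
    have "(e mod 4 = 3 \<or> e mod 4 = 1) \<longleftrightarrow> odd e" for e :: nat
      by presburger
    then show ?thesis
      by (auto simp: odd_multiples_below_def intro: odd_pos)
  qed
  finally show ?thesis .
qed

theorem partition_gf_pentagonal_triangular_eq_below:
  "fps_eq_below D (bounded_partition_gf D * (\<Sum>u | triple_product_exponent 12 4 u < D. fps_X ^ triple_product_exponent 12 4 u))
    (\<Sum>u | triple_product_exponent 4 1 u < D. fps_X ^ triple_product_exponent 4 1 u :: bit fps)"
proof -
  let ?G = "bounded_partition_gf D :: bit fps"
  let ?F4 = "distinct_parts_gf (multiples_below D 4) :: bit fps"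
  let ?F1 = "distinct_parts_gf (multiples_below D 1) :: bit fps"
  let ?O1 = "distinct_parts_gf (odd_multiples_below D 1) :: bit fps"
  have "fps_eq_below D (q_pochhammer fps_X D :: bit fps) ?F1"
    using prod_residue_class_eq_below[of 1 1 D D] q_pochhammer_X_power_bit[of 1 D]
    by (simp add: multiples_below_def)
  then have "fps_eq_below D (?G * q_pochhammer fps_X D) (?G * ?F1)"
    by (rule fps_eq_below_mult[OF fps_eq_below_refl])
  then have G_F1: "fps_eq_below D (?G * ?F1) 1"
    unfolding bounded_partition_gf_mult_q_pochhammer by (rule fps_eq_below_sym)
  have euler: "fps_eq_below D 1 (?O1 * ?F1)"
    using distinct_parts_gf_odd_multiples_multiples_eq_below[of 1 D] by (simp add: fps_eq_below_sym)
  have "fps_eq_below D (?G * (\<Sum>u | triple_product_exponent 12 4 u < D. fps_X ^ triple_product_exponent 12 4 u)) (?G * ?F4 * 1)"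
    using pentagonal_series_bit_eq_below by (simp add: fps_eq_below_mult)
  also have "fps_eq_below D \<dots> (?G * ?F4 * (?O1 * ?F1))"
    using euler by (rule fps_eq_below_mult[OF fps_eq_below_refl])
  also have "?G * ?F4 * (?O1 * ?F1) = (?G * ?F1) * (?F4 * ?O1)"
    by (simp only: mult_ac)
  also have "fps_eq_below D \<dots> (1 * (?F4 * ?O1))"
    using G_F1 by (rule fps_eq_below_mult[OF _ fps_eq_below_refl])
  also have "fps_eq_below D \<dots> (\<Sum>u | triple_product_exponent 4 1 u < D. fps_X ^ triple_product_exponent 4 1 u)"
    using fps_eq_below_sym[OF triangular_series_bit_eq_below] by simp
  finally show ?thesis .
qed

section \<open>Pentagonal and triangular exponents\<close>

(* int_decode enumerates the integers as 0, -1, 1, -2, 2, ...; along this enumeration the triple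
   product exponents for (12, 4) and (4, 1) are 4 pi_k and k (k + 1) / 2. *)
lemma int_decode_even: "int_decode (2 * t) = int t"
  by (simp add: int_decode_def sum_decode_def)

lemma int_decode_odd: "int_decode (2 * m + 1) = - int m - 1"
  by (simp add: int_decode_def sum_decode_def)

lemma four_gen_pent_even: "4 * gen_pent (2 * t) = 6 * int t ^ 2 + 2 * int t"
proof -
  have "even (int t * (3 * int t + 1))"
    by simp
  then obtain s where s: "int t * (3 * int t + 1) = 2 * s"
    by blast
  then have "6 * int (2 * t) ^ 2 + 2 * (3 - (-1) ^ (2 * t)) * int (2 * t) + (1 - (-1) ^ (2 * t)) = 16 * s"
    by (simp add: algebra_simps power2_eq_square)
  then have "gen_pent (2 * t) = s"
    unfolding gen_pent_def by simp
  with s show ?thesis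
    by (simp add: algebra_simps power2_eq_square)
qed

lemma four_gen_pent_odd: "4 * gen_pent (2 * m + 1) = 6 * int m ^ 2 + 10 * int m + 4"
proof -
  have "even ((int m + 1) * (3 * int m + 2))"
    by simp
  then obtain s where s: "(int m + 1) * (3 * int m + 2) = 2 * s"
    by blast
  then have "6 * int (2 * m + 1) ^ 2 + 2 * (3 - (-1) ^ (2 * m + 1)) * int (2 * m + 1) + (1 - (-1) ^ (2 * m + 1)) = 16 * s"
    by (simp add: algebra_simps power2_eq_square)
  then have "gen_pent (2 * m + 1) = s"
    unfolding gen_pent_def by simp
  with s show ?thesis
    by (simp add: algebra_simps power2_eq_square)
qed

lemma triple_product_exponent_12_4_int_decode: "int (triple_product_exponent 12 4 (int_decode k)) = 4 * gen_pent k"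
proof (cases "even k")
  case True
  then obtain t where k: "k = 2 * t"
    by blast
  from two_times_triple_product_exponent[of 4 12 "int t"]
  have "2 * int (triple_product_exponent 12 4 (int t)) = 12 * int t * (int t + 1) - 8 * int t"
    by simp
  then show ?thesis
    unfolding k int_decode_even four_gen_pent_even by algebra
next
  case False
  then obtain m where k: "k = 2 * m + 1"
    using oddE by blast
  from two_times_triple_product_exponent[of 4 12 "- int m - 1"]
  have "2 * int (triple_product_exponent 12 4 (- int m - 1)) = 12 * (- int m - 1) * (- int m) + 8 * (int m + 1)"
    by simp
  then show ?thesis
    unfolding k int_decode_odd four_gen_pent_odd by algebra
qed

lemma triple_product_exponent_4_1_int_decode:
  "2 * int (triple_product_exponent 4 1 (int_decode k)) = int k * (int k + 1)"
proof (cases "even k")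
  case True
  then obtain t where k: "k = 2 * t"
    by blast
  from two_times_triple_product_exponent[of 1 4 "int t"]
  have "2 * int (triple_product_exponent 4 1 (int t)) = 4 * int t * (int t + 1) - 2 * int t"
    by simp
  then show ?thesis
    unfolding k int_decode_even of_nat_mult of_nat_numeral by algebra
next
  case False
  then obtain m where k: "k = 2 * m + 1"
    using oddE by blast
  from two_times_triple_product_exponent[of 1 4 "- int m - 1"]
  have "2 * int (triple_product_exponent 4 1 (- int m - 1)) = 4 * (- int m - 1) * (- int m) + 2 * (int m + 1)"
    by simp
  then show ?thesis
    unfolding k int_decode_odd of_nat_add of_nat_mult of_nat_numeral of_nat_1 by algebra
qed

lemma triangle_int_Suc:
  "int (Suc k) * (int (Suc k) + 1) div 2 = int k * (int k + 1) div 2 + int k + 1"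
proof -
  have "2 * (int (Suc k) * (int (Suc k) + 1) div 2) = 2 * (int k * (int k + 1) div 2 + int k + 1)"
    unfolding distrib_left two_times_triangle_int by (simp add: algebra_simps)
  then show ?thesis
    by simp
qed

lemma card_triangle_int_eq:
  "card {k::nat. int k * (int k + 1) div 2 = n} = (if triangular n then 1 else 0)"
proof -
  have "strict_mono (\<lambda>k::nat. int k * (int k + 1) div 2)"
    unfolding strict_mono_Suc_iff triangle_int_Suc by simp
  then have inj: "inj (\<lambda>k::nat. int k * (int k + 1) div 2)"
    by (rule strict_mono_imp_inj_on)
  show ?thesis
  proof (cases "triangular n")
    case True
    then obtain k0 where "n = int k0 * (int k0 + 1) div 2"
      unfolding triangular_def by blast
    then have "{k::nat. int k * (int k + 1) div 2 = n} = {k0}"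
      using inj by (auto dest: injD)
    with True show ?thesis
      by simp
  next
    case False
    then have "{k::nat. int k * (int k + 1) div 2 = n} = {}"
      unfolding triangular_def by auto
    with False show ?thesis
      by simp
  qed
qed

lemma of_int_eq_iff_cong_bit: "(of_int x :: bit) = of_int y \<longleftrightarrow> [x = y] (mod 2)"
proof -
  have reduce: "(of_int x :: bit) = of_int (x mod 2)" for x
  proof -
    have "(of_int x :: bit) = of_int (2 * (x div 2) + x mod 2)"
      by simp
    also have "\<dots> = of_int (x mod 2)"
      by (simp only: of_int_add of_int_mult of_int_numeral bit_2_eq_0 mult_zero_left add_0)
    finally show ?thesis .
  qed
  have "x mod 2 = 0 \<or> x mod 2 = 1" "y mod 2 = 0 \<or> y mod 2 = 1"
    by presburger+
  then show ?thesis
    unfolding cong_def reduce[of x] reduce[of y] by auto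
qed

lemma fps_nth_partition_gf_pentagonal_series:
  "fps_nth (bounded_partition_gf (Suc m) * (\<Sum>u | triple_product_exponent 12 4 u < Suc m. fps_X ^ triple_product_exponent 12 4 u)) m
    = (\<Sum>j | 4 * gen_pent j \<le> int m. of_nat (partition_count (int m - 4 * gen_pent j)) :: bit)"
proof -
  let ?e = "triple_product_exponent 12 4"
  have "fps_nth (bounded_partition_gf (Suc m) * (\<Sum>u | ?e u < Suc m. fps_X ^ ?e u)) m
      = (\<Sum>u | u \<in> {u. ?e u < Suc m} \<and> ?e u \<le> m. fps_nth (bounded_partition_gf (Suc m)) (m - ?e u) :: bit)"
    by (rule fps_nth_mult_sum_X_power) (rule finite_triple_product_exponent_less; simp)
  also have "\<dots> = (\<Sum>u | ?e u \<le> m. of_nat (partition_count (int (m - ?e u))))"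
    by (rule sum.cong) (auto simp: bounded_partition_gf_nth)
  also have "\<dots> = (\<Sum>j | 4 * gen_pent j \<le> int m. of_nat (partition_count (int m - 4 * gen_pent j)))"
  proof (rule sum.reindex_bij_witness[of _ int_decode int_encode])
    fix u assume "u \<in> {u. ?e u \<le> m}"
    then show "int_encode u \<in> {j. 4 * gen_pent j \<le> int m}"
      using triple_product_exponent_12_4_int_decode[of "int_encode u"] by simp
    show "of_nat (partition_count (int m - 4 * gen_pent (int_encode u))) = (of_nat (partition_count (int (m - ?e u))) :: bit)"
      using \<open>u \<in> {u. ?e u \<le> m}\<close> triple_product_exponent_12_4_int_decode[of "int_encode u"] by (simp add: of_nat_diff)
  next
    fix j assume "j \<in> {j. 4 * gen_pent j \<le> int m}"
    then show "int_decode j \<in> {u. ?e u \<le> m}"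
      using triple_product_exponent_12_4_int_decode[of j] by simp
  qed simp_all
  finally show ?thesis .
qed

lemma fps_nth_triangular_series:
  "fps_nth (\<Sum>u | triple_product_exponent 4 1 u < Suc m. fps_X ^ triple_product_exponent 4 1 u :: bit fps) m
    = (if triangular (int m) then 1 else 0)"
proof -
  let ?e = "triple_product_exponent 4 1"
  have "fps_nth (\<Sum>u | ?e u < Suc m. fps_X ^ ?e u :: bit fps) m = of_nat (card {u \<in> {u. ?e u < Suc m}. ?e u = m})"
    by (rule fps_nth_sum_X_power) (rule finite_triple_product_exponent_less; simp)
  also have "{u \<in> {u. ?e u < Suc m}. ?e u = m} = int_decode ` {k. int k * (int k + 1) div 2 = int m}"
  proof -
    have "?e (int_decode k) = m \<longleftrightarrow> int k * (int k + 1) div 2 = int m" for k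
      using triple_product_exponent_4_1_int_decode[of k] by linarith
    note triangle = this
    show ?thesis
    proof (intro equalityI subsetI)
      fix u assume "u \<in> {u \<in> {u. ?e u < Suc m}. ?e u = m}"
      then have "int_encode u \<in> {k. int k * (int k + 1) div 2 = int m}"
        using triangle[of "int_encode u"] by simp
      then show "u \<in> int_decode ` {k. int k * (int k + 1) div 2 = int m}"
        by (rule rev_image_eqI) simp
    next
      fix u assume "u \<in> int_decode ` {k. int k * (int k + 1) div 2 = int m}"
      then obtain k where "u = int_decode k" "int k * (int k + 1) div 2 = int m"
        by blast
      then show "u \<in> {u \<in> {u. ?e u < Suc m}. ?e u = m}"
        using triangle[of k] by simp
    qed
  qed
  also have "card (int_decode ` {k. int k * (int k + 1) div 2 = int m}) = card {k. int k * (int k + 1) div 2 = int m}"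
    by (rule card_image) (rule inj_int_decode)
  finally show ?thesis
    by (simp add: card_triangle_int_eq)
qed

theorem theorem7:
  fixes n :: int
  shows "[(\<Sum>j \<in> {j::nat. 4 * gen_pent j \<le> n}. int (partition_count (n - 4 * gen_pent j)))
          = (if triangular n then 1 else 0)] (mod 2)"
proof (cases "0 \<le> n")
  case True
  then obtain m where n: "n = int m"
    by (metis nonneg_int_cases)
  have "fps_nth (bounded_partition_gf (Suc m) * (\<Sum>u | triple_product_exponent 12 4 u < Suc m. fps_X ^ triple_product_exponent 12 4 u)) m
      = fps_nth (\<Sum>u | triple_product_exponent 4 1 u < Suc m. fps_X ^ triple_product_exponent 4 1 u :: bit fps) m"
    using partition_gf_pentagonal_triangular_eq_below[of "Suc m"] by (simp add: fps_eq_below_def)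
  then have "(\<Sum>j | 4 * gen_pent j \<le> n. of_nat (partition_count (n - 4 * gen_pent j)) :: bit)
      = (if triangular n then 1 else 0)"
    unfolding fps_nth_partition_gf_pentagonal_series fps_nth_triangular_series n .
  then show ?thesis
    unfolding of_int_eq_iff_cong_bit[symmetric] by simp
next
  case False
  have "0 \<le> 4 * gen_pent j" for j
    using triple_product_exponent_12_4_int_decode[of j] by linarith
  with False have "{j. 4 * gen_pent j \<le> n} = {}"
    by (simp add: not_le order.strict_trans2)
  moreover have "\<not> triangular n"
    using False triangle_int_bounds(1) unfolding triangular_def by (metis less_le_trans not_le)
  ultimately show ?thesis
    by simp
qed

end
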